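(* Let $\mathbb{T}$ be a geometric theory over $\Sigma$. Then $\mathbf{M}_{\mathbb{T}}=(I_{\mathbb{T}}\rightrightarrows M_{\mathbb{T}})$ is a topological groupoid: the domain and codomain maps $d,c:I_{\mathbb{T}}\to M_{\mathbb{T}}$, the composition map $m:I_{\mathbb{T}}\times_{M_{\mathbb{T}}}I_{\mathbb{T}}\to I_{\mathbb{T}}$, the identity map $e:M_{\mathbb{T}}\to I_{\mathbb{T}}$ and the inverse map $i:I_{\mathbb{T}}\to I_{\mathbb{T}}$ are all continuous.
   Context: Let $\Sigma$ be a single-sorted first-order signature with equality, $\kappa\geq|\Sigma|+\aleph_0$ an infinite cardinal, and $\mathbb{S}$ a fixed set of cardinality at least $\kappa$. An $\mathbb{S}$-indexed $\Sigma$-structure is one whose underlying set is a quotient $A/{\sim}$ of a subset $A\subseteq\mathbb{S}$ (elements $[a]$). $M_\Sigma$ is the set of all such structures and $I_\Sigma$ the set of all isomorphisms between them, with domain and codomain maps $d,c$. The logical topology on $M_\Sigma$ is the coarsest containing the sets $\{\mathbf{M}:[a]\in\mathbf{M}\}$ ($a\in\mathbb{S}$), $\{\mathbf{M}:[\mathbf{a}]\in R^{\mathbf{M}}\}$ (each $n$-ary relation symbol $R$ including equality and nullary symbols), and $\{\mathbf{M}:f^{\mathbf{M}}([\mathbf{a}])=[b]\}$ (each function symbol $f$). The logical topology on $I_\Sigma$ is the coarsest making $d,c$ continuous and containing all $\{\mathbf{f}:[a]\in d(\mathbf{f}),[b]\in c(\mathbf{f}),\mathbf{f}([a])=[b]\}$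 ($a,b\in\mathbb{S}$). $M_{\mathbb{T}}\subseteq M_\Sigma$ is the set of $\mathbb{S}$-indexed $\mathbb{T}$-models and $I_{\mathbb{T}}\subseteq I_\Sigma$ the set of isomorphisms between them, with subspace topologies (the fibre product $I_{\mathbb{T}}\times_{M_{\mathbb{T}}}I_{\mathbb{T}}$ with its subspace-of-product topology). *)

theory Defs
  imports "HOL-Analysis.Analysis"
begin

text \<open>A single-sorted signature is given by a type 'r of relation symbols with arity
  function ar_r and a type 'f of function symbols with arity function ar_f.
  Equality is built in.\<close>

datatype ('f, 'v) trm = Var 'v | App 'f "('f, 'v) trm list"

datatype ('r, 'f, 'v, 'i) gfm =
    GEq "('f, 'v) trm" "('f, 'v) trm"
  | GRel 'r "('f, 'v) trm list"
  | GTop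
  | GBot
  | GConj "('r, 'f, 'v, 'i) gfm" "('r, 'f, 'v, 'i) gfm"
  | GDisj "'i set" "'i \<Rightarrow> ('r, 'f, 'v, 'i) gfm"
  | GEx 'v "('r, 'f, 'v, 'i) gfm"

fun wf_trm :: "('f \<Rightarrow> nat) \<Rightarrow> ('f, 'v) trm \<Rightarrow> bool" where
  "wf_trm ar_f (Var x) = True"
| "wf_trm ar_f (App f ts) = (length ts = ar_f f \<and> (\<forall>t\<in>set ts. wf_trm ar_f t))"

fun fv_trm :: "('f, 'v) trm \<Rightarrow> 'v set" where
  "fv_trm (Var x) = {x}"
| "fv_trm (App f ts) = (\<Union>t\<in>set ts. fv_trm t)"

primrec wf_gfm :: "('r \<Rightarrow> nat) \<Rightarrow> ('f \<Rightarrow> nat) \<Rightarrow> ('r, 'f, 'v, 'i) gfm \<Rightarrow> bool" where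
  "wf_gfm ar_r ar_f (GEq t u) = (wf_trm ar_f t \<and> wf_trm ar_f u)"
| "wf_gfm ar_r ar_f (GRel R ts) = (length ts = ar_r R \<and> (\<forall>t\<in>set ts. wf_trm ar_f t))"
| "wf_gfm ar_r ar_f GTop = True"
| "wf_gfm ar_r ar_f GBot = True"
| "wf_gfm ar_r ar_f (GConj p q) = (wf_gfm ar_r ar_f p \<and> wf_gfm ar_r ar_f q)"
| "wf_gfm ar_r ar_f (GDisj I ps) = (\<forall>i\<in>I. wf_gfm ar_r ar_f (ps i))"
| "wf_gfm ar_r ar_f (GEx x p) = wf_gfm ar_r ar_f p"

primrec fv_gfm :: "('r, 'f, 'v, 'i) gfm \<Rightarrow> 'v set" where
  "fv_gfm (GEq t u) = fv_trm t \<union> fv_trm u"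
| "fv_gfm (GRel R ts) = (\<Union>t\<in>set ts. fv_trm t)"
| "fv_gfm GTop = {}"
| "fv_gfm GBot = {}"
| "fv_gfm (GConj p q) = fv_gfm p \<union> fv_gfm q"
| "fv_gfm (GDisj I ps) = (\<Union>i\<in>I. fv_gfm (ps i))"
| "fv_gfm (GEx x p) = fv_gfm p - {x}"

text \<open>A geometric sequent  phi |-_xs psi  is a triple (xs, phi, psi) with xs the context.\<close>

type_synonym ('r, 'f, 'v, 'i) gseq = "'v list \<times> ('r, 'f, 'v, 'i) gfm \<times> ('r, 'f, 'v, 'i) gfm"

definition geometric_theory ::
  "('r \<Rightarrow> nat) \<Rightarrow> ('f \<Rightarrow> nat) \<Rightarrow> ('r, 'f, 'v, 'i) gseq set \<Rightarrow> bool" where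
  "geometric_theory ar_r ar_f T \<longleftrightarrow>
     (\<forall>(xs, p, q)\<in>T. wf_gfm ar_r ar_f p \<and> wf_gfm ar_r ar_f q \<and>
        fv_gfm p \<subseteq> set xs \<and> fv_gfm q \<subseteq> set xs)"

text \<open>An S-indexed structure: underlying set A (sdom) a subset of S, equivalence
  relation seqv on A; elements are the classes [a] = seqv `` {a}.
  srel R is the set of tuples (lists of classes) in R^M, sfun f the interpretation
  of f on tuples of classes (canonically {} outside its domain).\<close>

record ('s, 'r, 'f) struct =
  sdom :: "'s set"
  seqv :: "('s \<times> 's) set"
  srel :: "'r \<Rightarrow> 's set list set"
  sfun :: "'f \<Rightarrow> 's set list \<Rightarrow> 's set"

definition cls :: "('s, 'r, 'f) struct \<Rightarrow> 's \<Rightarrow> 's set" where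
  "cls M a = seqv M `` {a}"

definition elems :: "('s, 'r, 'f) struct \<Rightarrow> 's set set" where
  "elems M = sdom M // seqv M"

definition valid_tuple :: "('s, 'r, 'f) struct \<Rightarrow> nat \<Rightarrow> 's set list \<Rightarrow> bool" where
  "valid_tuple M n xs \<longleftrightarrow> length xs = n \<and> set xs \<subseteq> elems M"

definition MSigma :: "'s set \<Rightarrow> ('r \<Rightarrow> nat) \<Rightarrow> ('f \<Rightarrow> nat) \<Rightarrow> ('s, 'r, 'f) struct set" where
  "MSigma S ar_r ar_f = {M. sdom M \<subseteq> S \<and> equiv (sdom M) (seqv M) \<and>
      (\<forall>R. \<forall>xs\<in>srel M R. valid_tuple M (ar_r R) xs) \<and>
      (\<forall>f xs. valid_tuple M (ar_f f) xs \<longrightarrow> sfun M f xs \<in> elems M) \<and>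
      (\<forall>f xs. \<not> valid_tuple M (ar_f f) xs \<longrightarrow> sfun M f xs = {})}"

fun eval_trm :: "('s, 'r, 'f) struct \<Rightarrow> ('v \<Rightarrow> 's set) \<Rightarrow> ('f, 'v) trm \<Rightarrow> 's set" where
  "eval_trm M v (Var x) = v x"
| "eval_trm M v (App f ts) = sfun M f (map (eval_trm M v) ts)"

primrec sat :: "('s, 'r, 'f) struct \<Rightarrow> ('v \<Rightarrow> 's set) \<Rightarrow> ('r, 'f, 'v, 'i) gfm \<Rightarrow> bool" where
  "sat M v (GEq t u) = (eval_trm M v t = eval_trm M v u)"
| "sat M v (GRel R ts) = (map (eval_trm M v) ts \<in> srel M R)"
| "sat M v GTop = True"
| "sat M v GBot = False"
| "sat M v (GConj p q) = (sat M v p \<and> sat M v q)"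
| "sat M v (GDisj I ps) = (\<exists>i\<in>I. sat M v (ps i))"
| "sat M v (GEx x p) = (\<exists>a\<in>elems M. sat M (v(x := a)) p)"

definition sat_seq :: "('s, 'r, 'f) struct \<Rightarrow> ('r, 'f, 'v, 'i) gseq \<Rightarrow> bool" where
  "sat_seq M sq = (case sq of (xs, p, q) \<Rightarrow>
      (\<forall>v. (\<forall>x\<in>set xs. v x \<in> elems M) \<longrightarrow> sat M v p \<longrightarrow> sat M v q))"

definition MT :: "'s set \<Rightarrow> ('r \<Rightarrow> nat) \<Rightarrow> ('f \<Rightarrow> nat) \<Rightarrow> ('r, 'f, 'v, 'i) gseq set
    \<Rightarrow> ('s, 'r, 'f) struct set" where
  "MT S ar_r ar_f T = {M \<in> MSigma S ar_r ar_f. \<forall>sq\<in>T. sat_seq M sq}"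

text \<open>An isomorphism is a triple (M, g, N): domain M, codomain N, and g a bijection
  from the elements of M onto those of N (extensional: {} outside), preserving and
  reflecting relations and commuting with the function symbols.\<close>

type_synonym ('s, 'r, 'f) iso = "('s, 'r, 'f) struct \<times> ('s set \<Rightarrow> 's set) \<times> ('s, 'r, 'f) struct"

definition dom_iso :: "('s, 'r, 'f) iso \<Rightarrow> ('s, 'r, 'f) struct" where
  "dom_iso F = fst F"

definition cod_iso :: "('s, 'r, 'f) iso \<Rightarrow> ('s, 'r, 'f) struct" where
  "cod_iso F = snd (snd F)"

definition fun_iso :: "('s, 'r, 'f) iso \<Rightarrow> 's set \<Rightarrow> 's set" where
  "fun_iso F = fst (snd F)"

definition is_iso :: "('r \<Rightarrow> nat) \<Rightarrow> ('f \<Rightarrow> nat) \<Rightarrow> ('s, 'r, 'f) iso \<Rightarrow> bool" where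
  "is_iso ar_r ar_f F \<longleftrightarrow> (case F of (M, g, N) \<Rightarrow>
      bij_betw g (elems M) (elems N) \<and>
      (\<forall>x. x \<notin> elems M \<longrightarrow> g x = {}) \<and>
      (\<forall>R xs. valid_tuple M (ar_r R) xs \<longrightarrow> (xs \<in> srel M R \<longleftrightarrow> map g xs \<in> srel N R)) \<and>
      (\<forall>f xs. valid_tuple M (ar_f f) xs \<longrightarrow> g (sfun M f xs) = sfun N f (map g xs)))"

definition ISigma :: "'s set \<Rightarrow> ('r \<Rightarrow> nat) \<Rightarrow> ('f \<Rightarrow> nat) \<Rightarrow> ('s, 'r, 'f) iso set" where
  "ISigma S ar_r ar_f = {F. dom_iso F \<in> MSigma S ar_r ar_f \<and> cod_iso F \<in> MSigma S ar_r ar_f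
      \<and> is_iso ar_r ar_f F}"

definition IT :: "'s set \<Rightarrow> ('r \<Rightarrow> nat) \<Rightarrow> ('f \<Rightarrow> nat) \<Rightarrow> ('r, 'f, 'v, 'i) gseq set
    \<Rightarrow> ('s, 'r, 'f) iso set" where
  "IT S ar_r ar_f T = {F \<in> ISigma S ar_r ar_f.
      dom_iso F \<in> MT S ar_r ar_f T \<and> cod_iso F \<in> MT S ar_r ar_f T}"

definition MSigma_subbase :: "'s set \<Rightarrow> ('r \<Rightarrow> nat) \<Rightarrow> ('f \<Rightarrow> nat)
    \<Rightarrow> ('s, 'r, 'f) struct set set" where
  "MSigma_subbase S ar_r ar_f =
     {MSigma S ar_r ar_f}
   \<union> {{M \<in> MSigma S ar_r ar_f. a \<in> sdom M} | a. a \<in> S}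
   \<union> {{M \<in> MSigma S ar_r ar_f. set as \<subseteq> sdom M \<and> map (cls M) as \<in> srel M R}
        | R as. length as = ar_r R \<and> set as \<subseteq> S}
   \<union> {{M \<in> MSigma S ar_r ar_f. a \<in> sdom M \<and> b \<in> sdom M \<and> cls M a = cls M b}
        | a b. a \<in> S \<and> b \<in> S}
   \<union> {{M \<in> MSigma S ar_r ar_f. set as \<subseteq> sdom M \<and> b \<in> sdom M \<and>
          sfun M f (map (cls M) as) = cls M b}
        | f as b. length as = ar_f f \<and> set as \<subseteq> S \<and> b \<in> S}"

definition MSigma_top :: "'s set \<Rightarrow> ('r \<Rightarrow> nat) \<Rightarrow> ('f \<Rightarrow> nat) \<Rightarrow> ('s, 'r, 'f) struct topology" where
  "MSigma_top S ar_r ar_f = topology_generated_by (MSigma_subbase S ar_r ar_f)"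

definition ISigma_subbase :: "'s set \<Rightarrow> ('r \<Rightarrow> nat) \<Rightarrow> ('f \<Rightarrow> nat)
    \<Rightarrow> ('s, 'r, 'f) iso set set" where
  "ISigma_subbase S ar_r ar_f =
     {ISigma S ar_r ar_f}
   \<union> {{F \<in> ISigma S ar_r ar_f. dom_iso F \<in> U} | U. openin (MSigma_top S ar_r ar_f) U}
   \<union> {{F \<in> ISigma S ar_r ar_f. cod_iso F \<in> U} | U. openin (MSigma_top S ar_r ar_f) U}
   \<union> {{F \<in> ISigma S ar_r ar_f. a \<in> sdom (dom_iso F) \<and> b \<in> sdom (cod_iso F) \<and>
          fun_iso F (cls (dom_iso F) a) = cls (cod_iso F) b}
        | a b. a \<in> S \<and> b \<in> S}"

definition ISigma_top :: "'s set \<Rightarrow> ('r \<Rightarrow> nat) \<Rightarrow> ('f \<Rightarrow> nat) \<Rightarrow> ('s, 'r, 'f) iso topology" where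
  "ISigma_top S ar_r ar_f = topology_generated_by (ISigma_subbase S ar_r ar_f)"

definition MT_top :: "'s set \<Rightarrow> ('r \<Rightarrow> nat) \<Rightarrow> ('f \<Rightarrow> nat) \<Rightarrow> ('r, 'f, 'v, 'i) gseq set
    \<Rightarrow> ('s, 'r, 'f) struct topology" where
  "MT_top S ar_r ar_f T = subtopology (MSigma_top S ar_r ar_f) (MT S ar_r ar_f T)"

definition IT_top :: "'s set \<Rightarrow> ('r \<Rightarrow> nat) \<Rightarrow> ('f \<Rightarrow> nat) \<Rightarrow> ('r, 'f, 'v, 'i) gseq set
    \<Rightarrow> ('s, 'r, 'f) iso topology" where
  "IT_top S ar_r ar_f T = subtopology (ISigma_top S ar_r ar_f) (IT S ar_r ar_f T)"

definition ITfib_top :: "'s set \<Rightarrow> ('r \<Rightarrow> nat) \<Rightarrow> ('f \<Rightarrow> nat) \<Rightarrow> ('r, 'f, 'v, 'i) gseq set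
    \<Rightarrow> (('s, 'r, 'f) iso \<times> ('s, 'r, 'f) iso) topology" where
  "ITfib_top S ar_r ar_f T =
     subtopology (prod_topology (IT_top S ar_r ar_f T) (IT_top S ar_r ar_f T))
       {(F, G). F \<in> IT S ar_r ar_f T \<and> G \<in> IT S ar_r ar_f T \<and> cod_iso F = dom_iso G}"

definition comp_iso :: "('s, 'r, 'f) iso \<times> ('s, 'r, 'f) iso \<Rightarrow> ('s, 'r, 'f) iso" where
  "comp_iso FG = (case FG of (F, G) \<Rightarrow>
     (dom_iso F, (\<lambda>x. if x \<in> elems (dom_iso F) then fun_iso G (fun_iso F x) else {}), cod_iso G))"

definition id_iso :: "('s, 'r, 'f) struct \<Rightarrow> ('s, 'r, 'f) iso" where
  "id_iso M = (M, (\<lambda>x. if x \<in> elems M then x else {}), M)"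

definition inv_iso :: "('s, 'r, 'f) iso \<Rightarrow> ('s, 'r, 'f) iso" where
  "inv_iso F = (cod_iso F,
     (\<lambda>y. if y \<in> elems (cod_iso F) then the_inv_into (elems (dom_iso F)) (fun_iso F) y else {}),
     dom_iso F)"

end

theory Submission
  imports Defs
begin

text \<open>Isomorphisms between structures in \<open>M\<^sub>\<Sigma>\<close> are closed under composition, identities and
  inverses, so it suffices to check that the preimages of subbasic opens of \<open>I\<^sub>\<Sigma>\<close> are open.
  Opens pulled back along \<open>d\<close> or \<open>c\<close> are handled by \<open>d \<circ> m = d \<circ> \<pi>\<^sub>1\<close>, \<open>d \<circ> e = id\<close>,
  \<open>d \<circ> i = c\<close> and their duals. For the opens ``\<open>f\<close> sends \<open>[a]\<close> to \<open>[b]\<close>'': the preimage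
  under \<open>i\<close> is ``\<open>f\<close> sends \<open>[b]\<close> to \<open>[a]\<close>'', the preimage under \<open>e\<close> is the subbasic open
  \<open>[a] = [b]\<close> of \<open>M\<^sub>\<Sigma>\<close>, and the preimage under \<open>m\<close> is the union over \<open>c \<in> \<bbbS>\<close> of
  ``\<open>f\<close> sends \<open>[a]\<close> to \<open>[c]\<close>'' \<open>\<times>\<close> ``\<open>g\<close> sends \<open>[c]\<close> to \<open>[b]\<close>'', because every element of the
  middle structure is a class \<open>[c]\<close> with \<open>c \<in> \<bbbS>\<close>.\<close>

lemma elems_iff_cls: "x \<in> elems M \<longleftrightarrow> (\<exists>a\<in>sdom M. x = cls M a)"
  by (auto simp: elems_def cls_def quotient_def)

lemma cls_in_elems: "a \<in> sdom M \<Longrightarrow> cls M a \<in> elems M"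
  by (auto simp: elems_iff_cls)

lemma valid_tuple_map:
  assumes "bij_betw g (elems M) (elems N)" and "valid_tuple M n xs"
  shows "valid_tuple N n (map g xs)"
  using assms bij_betw_imp_surj_on by (fastforce simp: valid_tuple_def)

lemma iso_components [simp]:
  "dom_iso (M, g, N) = M" "fun_iso (M, g, N) = g" "cod_iso (M, g, N) = N"
  by (simp_all add: dom_iso_def fun_iso_def cod_iso_def)

lemma iso_eq_triple: "F = (dom_iso F, fun_iso F, cod_iso F)"
  by (simp add: dom_iso_def fun_iso_def cod_iso_def)

lemma comp_iso_simps [simp]:
  "dom_iso (comp_iso (F, G)) = dom_iso F"
  "cod_iso (comp_iso (F, G)) = cod_iso G"
  "fun_iso (comp_iso (F, G)) = (\<lambda>x. if x \<in> elems (dom_iso F) then fun_iso G (fun_iso F x) else {})"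
  by (simp_all add: comp_iso_def dom_iso_def fun_iso_def cod_iso_def)

lemma id_iso_simps [simp]:
  "dom_iso (id_iso M) = M"
  "cod_iso (id_iso M) = M"
  "fun_iso (id_iso M) = (\<lambda>x. if x \<in> elems M then x else {})"
  by (simp_all add: id_iso_def dom_iso_def fun_iso_def cod_iso_def)

lemma inv_iso_simps [simp]:
  "dom_iso (inv_iso F) = cod_iso F"
  "cod_iso (inv_iso F) = dom_iso F"
  "fun_iso (inv_iso F) = (\<lambda>y. if y \<in> elems (cod_iso F)
      then the_inv_into (elems (dom_iso F)) (fun_iso F) y else {})"
  by (simp_all add: inv_iso_def dom_iso_def fun_iso_def cod_iso_def)

lemma sfun_in_elems:
  "M \<in> MSigma S ar_r ar_f \<Longrightarrow> valid_tuple M (ar_f f) xs \<Longrightarrow> sfun M f xs \<in> elems M"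
  by (simp add: MSigma_def)

lemma is_iso_id_iso:
  assumes M: "M \<in> MSigma S ar_r ar_f"
  shows "is_iso ar_r ar_f (id_iso M)"
proof -
  define g where "g = (\<lambda>x. if x \<in> elems M then x else {})"
  have map_g: "map g xs = xs" if "valid_tuple M n xs" for n xs
    using that by (auto simp: g_def valid_tuple_def intro!: map_idI)
  have "bij_betw g (elems M) (elems M)"
    by (rule bij_betw_cong[THEN iffD1, OF _ bij_betw_id]) (simp add: g_def)
  moreover have "g (sfun M f xs) = sfun M f (map g xs)" if "valid_tuple M (ar_f f) xs" for f xs
    using that sfun_in_elems[OF M that] map_g by (simp add: g_def)
  moreover have "g x = {}" if "x \<notin> elems M" for x
    using that by (simp add: g_def)
  ultimately show ?thesis
    using map_g unfolding is_iso_def id_iso_def g_def[symmetric] by simp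
qed

lemma is_iso_comp_iso:
  assumes F: "is_iso ar_r ar_f F" and G: "is_iso ar_r ar_f G"
    and FG: "cod_iso F = dom_iso G" and dom_F: "dom_iso F \<in> MSigma S ar_r ar_f"
  shows "is_iso ar_r ar_f (comp_iso (F, G))"
proof -
  obtain M f N g P where F_eq: "F = (M, f, N)" and G_eq: "G = (N, g, P)"
    using FG iso_eq_triple by metis
  define h where "h = (\<lambda>x. if x \<in> elems M then g (f x) else {})"
  have M: "M \<in> MSigma S ar_r ar_f"
    using dom_F by (simp add: F_eq)
  from F G have bf: "bij_betw f (elems M) (elems N)" and bg: "bij_betw g (elems N) (elems P)"
    and rel_f: "\<And>R xs. valid_tuple M (ar_r R) xs \<Longrightarrow> xs \<in> srel M R \<longleftrightarrow> map f xs \<in> srel N R"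
    and rel_g: "\<And>R ys. valid_tuple N (ar_r R) ys \<Longrightarrow> ys \<in> srel N R \<longleftrightarrow> map g ys \<in> srel P R"
    and fun_f: "\<And>c xs. valid_tuple M (ar_f c) xs \<Longrightarrow> f (sfun M c xs) = sfun N c (map f xs)"
    and fun_g: "\<And>c ys. valid_tuple N (ar_f c) ys \<Longrightarrow> g (sfun N c ys) = sfun P c (map g ys)"
    by (simp_all add: F_eq G_eq is_iso_def)
  have map_h: "map h xs = map g (map f xs)" if "valid_tuple M n xs" for n xs
    using that by (auto simp: h_def valid_tuple_def)
  have "bij_betw h (elems M) (elems P)"
    by (rule bij_betw_cong[THEN iffD1, OF _ bij_betw_trans[OF bf bg]]) (simp add: h_def)
  moreover have "h x = {}" if "x \<notin> elems M" for x
    using that by (simp add: h_def)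
  moreover have "xs \<in> srel M R \<longleftrightarrow> map h xs \<in> srel P R" if "valid_tuple M (ar_r R) xs" for R xs
    unfolding map_h[OF that] using rel_f[OF that] rel_g[OF valid_tuple_map[OF bf that]] by simp
  moreover have "h (sfun M c xs) = sfun P c (map h xs)" if "valid_tuple M (ar_f c) xs" for c xs
    unfolding map_h[OF that]
    using fun_f[OF that] fun_g[OF valid_tuple_map[OF bf that]] sfun_in_elems[OF M that]
    by (simp add: h_def)
  moreover have "comp_iso (F, G) = (M, h, P)"
    by (simp add: comp_iso_def F_eq G_eq h_def cong: if_cong)
  ultimately show ?thesis
    unfolding is_iso_def by simp
qed

lemma is_iso_inv_iso:
  assumes F: "is_iso ar_r ar_f F" and dom_F: "dom_iso F \<in> MSigma S ar_r ar_f"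
  shows "is_iso ar_r ar_f (inv_iso F)"
proof -
  obtain M f N where F_eq: "F = (M, f, N)"
    using iso_eq_triple by metis
  define h where "h = (\<lambda>y. if y \<in> elems N then the_inv_into (elems M) f y else {})"
  have M: "M \<in> MSigma S ar_r ar_f"
    using dom_F by (simp add: F_eq)
  from F have bf: "bij_betw f (elems M) (elems N)"
    and rel_f: "\<And>R xs. valid_tuple M (ar_r R) xs \<Longrightarrow> xs \<in> srel M R \<longleftrightarrow> map f xs \<in> srel N R"
    and fun_f: "\<And>c xs. valid_tuple M (ar_f c) xs \<Longrightarrow> f (sfun M c xs) = sfun N c (map f xs)"
    by (simp_all add: F_eq is_iso_def)
  have bh: "bij_betw h (elems N) (elems M)"
    by (rule bij_betw_cong[THEN iffD1, OF _ bij_betw_the_inv_into[OF bf]]) (simp add: h_def)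
  have f_h: "f (h y) = y" if "y \<in> elems N" for y
    using that bf by (simp add: h_def f_the_inv_into_f_bij_betw)
  have h_f: "h (f x) = x" if "x \<in> elems M" for x
    using that bf by (auto simp: h_def the_inv_into_f_f bij_betw_def)
  have map_f_h: "map f (map h ys) = ys" if "valid_tuple N n ys" for n ys
    using that f_h by (auto simp: valid_tuple_def intro!: map_idI)
  have "h y = {}" if "y \<notin> elems N" for y
    using that by (simp add: h_def)
  moreover have "ys \<in> srel N R \<longleftrightarrow> map h ys \<in> srel M R" if "valid_tuple N (ar_r R) ys" for R ys
    using rel_f[OF valid_tuple_map[OF bh that]] map_f_h[OF that] by simp
  moreover have "h (sfun N c ys) = sfun M c (map h ys)" if "valid_tuple N (ar_f c) ys" for c ys
    using fun_f[OF valid_tuple_map[OF bh that]] map_f_h[OF that]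
      h_f[OF sfun_in_elems[OF M valid_tuple_map[OF bh that]]] by simp
  moreover have "inv_iso F = (N, h, M)"
    by (simp add: inv_iso_def F_eq h_def cong: if_cong)
  ultimately show ?thesis
    using bh unfolding is_iso_def by simp
qed

lemma comp_iso_in_ISigma:
  assumes "F \<in> ISigma S ar_r ar_f" and "G \<in> ISigma S ar_r ar_f" and "cod_iso F = dom_iso G"
  shows "comp_iso (F, G) \<in> ISigma S ar_r ar_f"
  using assms by (auto simp: ISigma_def intro: is_iso_comp_iso)

lemma id_iso_in_ISigma: "M \<in> MSigma S ar_r ar_f \<Longrightarrow> id_iso M \<in> ISigma S ar_r ar_f"
  by (auto simp: ISigma_def intro: is_iso_id_iso)

lemma inv_iso_in_ISigma: "F \<in> ISigma S ar_r ar_f \<Longrightarrow> inv_iso F \<in> ISigma S ar_r ar_f"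
  by (auto simp: ISigma_def intro: is_iso_inv_iso)

lemma comp_iso_in_IT:
  assumes "F \<in> IT S ar_r ar_f T" and "G \<in> IT S ar_r ar_f T" and "cod_iso F = dom_iso G"
  shows "comp_iso (F, G) \<in> IT S ar_r ar_f T"
  using assms by (auto simp: IT_def intro: comp_iso_in_ISigma)

lemma id_iso_in_IT: "M \<in> MT S ar_r ar_f T \<Longrightarrow> id_iso M \<in> IT S ar_r ar_f T"
  by (auto simp: IT_def MT_def intro: id_iso_in_ISigma)

lemma inv_iso_in_IT: "F \<in> IT S ar_r ar_f T \<Longrightarrow> inv_iso F \<in> IT S ar_r ar_f T"
  by (auto simp: IT_def intro: inv_iso_in_ISigma)

lemma ISigma_bij_betw:
  "F \<in> ISigma S ar_r ar_f \<Longrightarrow> bij_betw (fun_iso F) (elems (dom_iso F)) (elems (cod_iso F))"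
  using iso_eq_triple[of F] by (auto simp: ISigma_def is_iso_def split: prod.splits)

definition iso_sends :: "'s set \<Rightarrow> ('r \<Rightarrow> nat) \<Rightarrow> ('f \<Rightarrow> nat) \<Rightarrow> 's \<Rightarrow> 's
    \<Rightarrow> ('s, 'r, 'f) iso set" where
  "iso_sends S ar_r ar_f a b = {F \<in> ISigma S ar_r ar_f.
      a \<in> sdom (dom_iso F) \<and> b \<in> sdom (cod_iso F) \<and> fun_iso F (cls (dom_iso F) a) = cls (cod_iso F) b}"

lemma iso_image_of_cls_obtain:
  assumes F: "F \<in> ISigma S ar_r ar_f" and a: "a \<in> sdom (dom_iso F)"
  obtains c where "c \<in> S" "c \<in> sdom (cod_iso F)" "fun_iso F (cls (dom_iso F) a) = cls (cod_iso F) c"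
proof -
  have "fun_iso F (cls (dom_iso F) a) \<in> elems (cod_iso F)"
    using ISigma_bij_betw[OF F] cls_in_elems[OF a] bij_betwE by blast
  moreover have "sdom (cod_iso F) \<subseteq> S"
    using F by (simp add: ISigma_def MSigma_def)
  ultimately show ?thesis
    using that by (auto simp: elems_iff_cls)
qed

lemma comp_iso_sends_iff:
  assumes F: "F \<in> ISigma S ar_r ar_f" and G: "G \<in> ISigma S ar_r ar_f" and FG: "cod_iso F = dom_iso G"
  shows "comp_iso (F, G) \<in> iso_sends S ar_r ar_f a b \<longleftrightarrow>
    (\<exists>c\<in>S. F \<in> iso_sends S ar_r ar_f a c \<and> G \<in> iso_sends S ar_r ar_f c b)"
proof
  assume "comp_iso (F, G) \<in> iso_sends S ar_r ar_f a b"
  then have a: "a \<in> sdom (dom_iso F)" and b: "b \<in> sdom (cod_iso G)"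
    and ab: "fun_iso G (fun_iso F (cls (dom_iso F) a)) = cls (cod_iso G) b"
    using cls_in_elems[of a "dom_iso F"] by (auto simp: iso_sends_def)
  obtain c where "c \<in> S" "c \<in> sdom (cod_iso F)" "fun_iso F (cls (dom_iso F) a) = cls (cod_iso F) c"
    using iso_image_of_cls_obtain[OF F a] .
  then show "\<exists>c\<in>S. F \<in> iso_sends S ar_r ar_f a c \<and> G \<in> iso_sends S ar_r ar_f c b"
    using F G FG a b ab by (auto simp: iso_sends_def)
next
  assume "\<exists>c\<in>S. F \<in> iso_sends S ar_r ar_f a c \<and> G \<in> iso_sends S ar_r ar_f c b"
  then show "comp_iso (F, G) \<in> iso_sends S ar_r ar_f a b"
    using comp_iso_in_ISigma[OF F G FG] FG by (auto simp: iso_sends_def cls_in_elems)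
qed

lemma inv_iso_sends_iff:
  assumes F: "F \<in> ISigma S ar_r ar_f"
  shows "inv_iso F \<in> iso_sends S ar_r ar_f a b \<longleftrightarrow> F \<in> iso_sends S ar_r ar_f b a"
proof (cases "a \<in> sdom (cod_iso F) \<and> b \<in> sdom (dom_iso F)")
  case True
  then have a: "cls (cod_iso F) a \<in> elems (cod_iso F)" and b: "cls (dom_iso F) b \<in> elems (dom_iso F)"
    by (simp_all add: cls_in_elems)
  note bij = ISigma_bij_betw[OF F]
  have "the_inv_into (elems (dom_iso F)) (fun_iso F) (cls (cod_iso F) a) = cls (dom_iso F) b
      \<longleftrightarrow> fun_iso F (cls (dom_iso F) b) = cls (cod_iso F) a"
    using f_the_inv_into_f_bij_betw[OF bij a] the_inv_into_f_eq[OF bij_betw_imp_inj_on[OF bij] _ b]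
    by metis
  then show ?thesis
    using True a F inv_iso_in_ISigma[OF F] by (simp add: iso_sends_def)
qed (auto simp: iso_sends_def)

lemma id_iso_sends_iff:
  assumes "M \<in> MSigma S ar_r ar_f"
  shows "id_iso M \<in> iso_sends S ar_r ar_f a b \<longleftrightarrow>
    a \<in> sdom M \<and> b \<in> sdom M \<and> cls M a = cls M b"
  using assms id_iso_in_ISigma by (auto simp: iso_sends_def cls_in_elems)

context
  fixes S :: "'s set" and ar_r :: "'r \<Rightarrow> nat" and ar_f :: "'f \<Rightarrow> nat"
    and T :: "('r, 'f, 'v, 'i) gseq set"
begin

lemma topspace_MSigma_top: "topspace (MSigma_top S ar_r ar_f) = MSigma S ar_r ar_f"
  unfolding MSigma_top_def topology_generated_by_topspace MSigma_subbase_def by blast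

lemma topspace_ISigma_top: "topspace (ISigma_top S ar_r ar_f) = ISigma S ar_r ar_f"
  unfolding ISigma_top_def topology_generated_by_topspace ISigma_subbase_def by blast

lemma topspace_MT_top: "topspace (MT_top S ar_r ar_f T) = MT S ar_r ar_f T"
  by (auto simp: MT_top_def topspace_MSigma_top MT_def)

lemma topspace_IT_top: "topspace (IT_top S ar_r ar_f T) = IT S ar_r ar_f T"
  by (auto simp: IT_top_def topspace_ISigma_top IT_def)

lemma topspace_ITfib_top: "topspace (ITfib_top S ar_r ar_f T) =
    {(F, G). F \<in> IT S ar_r ar_f T \<and> G \<in> IT S ar_r ar_f T \<and> cod_iso F = dom_iso G}"
  by (auto simp: ITfib_top_def topspace_IT_top)

lemma ISigma_subbase_cases:
  assumes "V \<in> ISigma_subbase S ar_r ar_f"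
  obtains "V = ISigma S ar_r ar_f"
  | U where "openin (MSigma_top S ar_r ar_f) U" "V = {F \<in> ISigma S ar_r ar_f. dom_iso F \<in> U}"
  | U where "openin (MSigma_top S ar_r ar_f) U" "V = {F \<in> ISigma S ar_r ar_f. cod_iso F \<in> U}"
  | a b where "a \<in> S" "b \<in> S" "V = iso_sends S ar_r ar_f a b"
  using assms unfolding ISigma_subbase_def iso_sends_def by blast

lemma openin_preimage_iso_sends:
  assumes g: "continuous_map X (IT_top S ar_r ar_f T) g" and "a \<in> S" and "b \<in> S"
  shows "openin X {x \<in> topspace X. g x \<in> iso_sends S ar_r ar_f a b}"
proof -
  have "iso_sends S ar_r ar_f a b \<in> ISigma_subbase S ar_r ar_f"
    using assms(2,3) unfolding ISigma_subbase_def iso_sends_def by blast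
  then have "openin (IT_top S ar_r ar_f T) (iso_sends S ar_r ar_f a b \<inter> IT S ar_r ar_f T)"
    unfolding IT_top_def ISigma_top_def by (intro openin_subtopology_Int topology_generated_by_Basis)
  note preimage_open = openin_continuous_map_preimage[OF g this]
  have "{x \<in> topspace X. g x \<in> iso_sends S ar_r ar_f a b} =
      {x \<in> topspace X. g x \<in> iso_sends S ar_r ar_f a b \<inter> IT S ar_r ar_f T}"
    using continuous_map_image_subset_topspace[OF g] by (auto simp: topspace_IT_top)
  then show ?thesis
    using preimage_open by (simp only:)
qed

lemma continuous_map_dom_iso_ISigma:
  "continuous_map (ISigma_top S ar_r ar_f) (MSigma_top S ar_r ar_f) dom_iso"
  unfolding continuous_map_def topspace_ISigma_top topspace_MSigma_top
proof (intro conjI allI impI)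
  show "dom_iso \<in> ISigma S ar_r ar_f \<rightarrow> MSigma S ar_r ar_f"
    by (auto simp: ISigma_def)
  fix U assume "openin (MSigma_top S ar_r ar_f) U"
  then have "{F \<in> ISigma S ar_r ar_f. dom_iso F \<in> U} \<in> ISigma_subbase S ar_r ar_f"
    unfolding ISigma_subbase_def by blast
  then show "openin (ISigma_top S ar_r ar_f) {F \<in> ISigma S ar_r ar_f. dom_iso F \<in> U}"
    unfolding ISigma_top_def by (rule topology_generated_by_Basis)
qed

lemma continuous_map_cod_iso_ISigma:
  "continuous_map (ISigma_top S ar_r ar_f) (MSigma_top S ar_r ar_f) cod_iso"
  unfolding continuous_map_def topspace_ISigma_top topspace_MSigma_top
proof (intro conjI allI impI)
  show "cod_iso \<in> ISigma S ar_r ar_f \<rightarrow> MSigma S ar_r ar_f"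
    by (auto simp: ISigma_def)
  fix U assume "openin (MSigma_top S ar_r ar_f) U"
  then have "{F \<in> ISigma S ar_r ar_f. cod_iso F \<in> U} \<in> ISigma_subbase S ar_r ar_f"
    unfolding ISigma_subbase_def by blast
  then show "openin (ISigma_top S ar_r ar_f) {F \<in> ISigma S ar_r ar_f. cod_iso F \<in> U}"
    unfolding ISigma_top_def by (rule topology_generated_by_Basis)
qed

lemma continuous_map_dom_iso_IT:
  "continuous_map (IT_top S ar_r ar_f T) (MSigma_top S ar_r ar_f) dom_iso"
  unfolding IT_top_def by (rule continuous_map_from_subtopology[OF continuous_map_dom_iso_ISigma])

lemma continuous_map_cod_iso_IT:
  "continuous_map (IT_top S ar_r ar_f T) (MSigma_top S ar_r ar_f) cod_iso"
  unfolding IT_top_def by (rule continuous_map_from_subtopology[OF continuous_map_cod_iso_ISigma])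

lemma continuous_map_into_IT_top:
  assumes into_IT: "f \<in> topspace X \<rightarrow> IT S ar_r ar_f T"
    and dom: "continuous_map X (MSigma_top S ar_r ar_f) (dom_iso \<circ> f)"
    and cod: "continuous_map X (MSigma_top S ar_r ar_f) (cod_iso \<circ> f)"
    and sends: "\<And>a b. a \<in> S \<Longrightarrow> b \<in> S \<Longrightarrow>
      openin X {x \<in> topspace X. f x \<in> iso_sends S ar_r ar_f a b}"
  shows "continuous_map X (IT_top S ar_r ar_f T) f"
proof -
  have into_ISigma: "f x \<in> ISigma S ar_r ar_f" if "x \<in> topspace X" for x
    using into_IT that by (auto simp: IT_def)
  have "continuous_map X (ISigma_top S ar_r ar_f) f"
    unfolding ISigma_top_def
  proof (rule continuous_on_generated_topo)
    show "f ` topspace X \<subseteq> \<Union>(ISigma_subbase S ar_r ar_f)"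
      using into_ISigma topspace_ISigma_top by (auto simp: ISigma_top_def)
    fix V assume "V \<in> ISigma_subbase S ar_r ar_f"
    then show "openin X (f -` V \<inter> topspace X)"
    proof (cases rule: ISigma_subbase_cases)
      case 1
      then show ?thesis
        using into_ISigma by (simp add: Int_absorb1 subset_eq)
    next
      case (2 U)
      then have "f -` V \<inter> topspace X = {x \<in> topspace X. (dom_iso \<circ> f) x \<in> U}"
        using into_ISigma by auto
      then show ?thesis
        using openin_continuous_map_preimage[OF dom 2(1)] by simp
    next
      case (3 U)
      then have "f -` V \<inter> topspace X = {x \<in> topspace X. (cod_iso \<circ> f) x \<in> U}"
        using into_ISigma by auto
      then show ?thesis
        using openin_continuous_map_preimage[OF cod 3(1)] by simp
    next
      case (4 a b)
      then show ?thesis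
        using sends[of a b] by (simp add: Int_def conj_commute)
    qed
  qed
  then show ?thesis
    unfolding IT_top_def using into_IT by (rule continuous_map_into_subtopology)
qed

lemma continuous_map_dom_iso:
  "continuous_map (IT_top S ar_r ar_f T) (MT_top S ar_r ar_f T) dom_iso"
  unfolding MT_top_def
  by (rule continuous_map_into_subtopology[OF continuous_map_dom_iso_IT])
    (auto simp: topspace_IT_top IT_def)

lemma continuous_map_cod_iso:
  "continuous_map (IT_top S ar_r ar_f T) (MT_top S ar_r ar_f T) cod_iso"
  unfolding MT_top_def
  by (rule continuous_map_into_subtopology[OF continuous_map_cod_iso_IT])
    (auto simp: topspace_IT_top IT_def)

lemma continuous_map_comp_iso:
  "continuous_map (ITfib_top S ar_r ar_f T) (IT_top S ar_r ar_f T) comp_iso"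
proof (rule continuous_map_into_IT_top)
  let ?X = "ITfib_top S ar_r ar_f T"
  have fst: "continuous_map ?X (IT_top S ar_r ar_f T) fst"
    and snd: "continuous_map ?X (IT_top S ar_r ar_f T) snd"
    unfolding ITfib_top_def by (rule continuous_map_subtopology_fst continuous_map_subtopology_snd)+
  show "comp_iso \<in> topspace ?X \<rightarrow> IT S ar_r ar_f T"
    by (auto simp: topspace_ITfib_top intro: comp_iso_in_IT)
  have dom_comp: "dom_iso \<circ> comp_iso = dom_iso \<circ> fst"
    by (auto simp: fun_eq_iff)
  show "continuous_map ?X (MSigma_top S ar_r ar_f) (dom_iso \<circ> comp_iso)"
    unfolding dom_comp by (rule continuous_map_compose[OF fst continuous_map_dom_iso_IT])
  have cod_comp: "cod_iso \<circ> comp_iso = cod_iso \<circ> snd"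
    by (auto simp: fun_eq_iff)
  show "continuous_map ?X (MSigma_top S ar_r ar_f) (cod_iso \<circ> comp_iso)"
    unfolding cod_comp by (rule continuous_map_compose[OF snd continuous_map_cod_iso_IT])
  fix a b assume a: "a \<in> S" and b: "b \<in> S"
  have comp_preimage: "{p \<in> topspace ?X. comp_iso p \<in> iso_sends S ar_r ar_f a b} =
      (\<Union>c\<in>S. {p \<in> topspace ?X. fst p \<in> iso_sends S ar_r ar_f a c} \<inter>
               {p \<in> topspace ?X. snd p \<in> iso_sends S ar_r ar_f c b})"
    by (auto simp: topspace_ITfib_top IT_def comp_iso_sends_iff)
  show "openin ?X {p \<in> topspace ?X. comp_iso p \<in> iso_sends S ar_r ar_f a b}"
    unfolding comp_preimage
    using openin_preimage_iso_sends[OF fst] openin_preimage_iso_sends[OF snd] a b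
    by (intro openin_Union) auto
qed

lemma continuous_map_id_iso:
  "continuous_map (MT_top S ar_r ar_f T) (IT_top S ar_r ar_f T) id_iso"
proof (rule continuous_map_into_IT_top)
  let ?X = "MT_top S ar_r ar_f T"
  have incl: "continuous_map ?X (MSigma_top S ar_r ar_f) id"
    unfolding MT_top_def by (rule continuous_map_from_subtopology[OF continuous_map_id])
  show "id_iso \<in> topspace ?X \<rightarrow> IT S ar_r ar_f T"
    by (auto simp: topspace_MT_top intro: id_iso_in_IT)
  show "continuous_map ?X (MSigma_top S ar_r ar_f) (dom_iso \<circ> id_iso)"
    and "continuous_map ?X (MSigma_top S ar_r ar_f) (cod_iso \<circ> id_iso)"
    using incl by (simp_all add: comp_def id_def)
  fix a b assume "a \<in> S" and "b \<in> S"
  then have "{M \<in> MSigma S ar_r ar_f. a \<in> sdom M \<and> b \<in> sdom M \<and> cls M a = cls M b}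
      \<in> MSigma_subbase S ar_r ar_f"
    unfolding MSigma_subbase_def by blast
  note subbasic_open = topology_generated_by_Basis[OF this, folded MSigma_top_def]
  have preimage: "{M \<in> topspace ?X. id_iso M \<in> iso_sends S ar_r ar_f a b} =
      {M \<in> topspace ?X. id M \<in>
        {M \<in> MSigma S ar_r ar_f. a \<in> sdom M \<and> b \<in> sdom M \<and> cls M a = cls M b}}"
    by (auto simp: topspace_MT_top MT_def id_iso_sends_iff)
  show "openin ?X {M \<in> topspace ?X. id_iso M \<in> iso_sends S ar_r ar_f a b}"
    unfolding preimage by (rule openin_continuous_map_preimage[OF incl subbasic_open])
qed

lemma continuous_map_inv_iso:
  "continuous_map (IT_top S ar_r ar_f T) (IT_top S ar_r ar_f T) inv_iso"
proof (rule continuous_map_into_IT_top)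
  let ?X = "IT_top S ar_r ar_f T"
  show "inv_iso \<in> topspace ?X \<rightarrow> IT S ar_r ar_f T"
    by (auto simp: topspace_IT_top intro: inv_iso_in_IT)
  have dom_inv: "dom_iso \<circ> inv_iso = cod_iso" and cod_inv: "cod_iso \<circ> inv_iso = dom_iso"
    by (simp_all add: fun_eq_iff)
  show "continuous_map ?X (MSigma_top S ar_r ar_f) (dom_iso \<circ> inv_iso)"
    unfolding dom_inv by (rule continuous_map_cod_iso_IT)
  show "continuous_map ?X (MSigma_top S ar_r ar_f) (cod_iso \<circ> inv_iso)"
    unfolding cod_inv by (rule continuous_map_dom_iso_IT)
  fix a b assume "a \<in> S" and "b \<in> S"
  have preimage: "{F \<in> topspace ?X. inv_iso F \<in> iso_sends S ar_r ar_f a b} =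
      {F \<in> topspace ?X. id F \<in> iso_sends S ar_r ar_f b a}"
    by (auto simp: topspace_IT_top IT_def inv_iso_sends_iff)
  show "openin ?X {F \<in> topspace ?X. inv_iso F \<in> iso_sends S ar_r ar_f a b}"
    unfolding preimage by (rule openin_preimage_iso_sends[OF continuous_map_id]) fact+
qed

end

theorem lemma2p5:
  fixes S :: "'s set"
    and ar_r :: "'r \<Rightarrow> nat" and ar_f :: "'f \<Rightarrow> nat"
    and T :: "('r, 'f, 'v, 'i) gseq set"
  assumes S_infinite: "infinite S"
    and S_large: "\<exists>h :: 'r + 'f \<Rightarrow> 's. inj h \<and> range h \<subseteq> S"
    and geom: "geometric_theory ar_r ar_f T"
  shows "continuous_map (IT_top S ar_r ar_f T) (MT_top S ar_r ar_f T) dom_iso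
       \<and> continuous_map (IT_top S ar_r ar_f T) (MT_top S ar_r ar_f T) cod_iso
       \<and> continuous_map (ITfib_top S ar_r ar_f T) (IT_top S ar_r ar_f T) comp_iso
       \<and> continuous_map (MT_top S ar_r ar_f T) (IT_top S ar_r ar_f T) id_iso
       \<and> continuous_map (IT_top S ar_r ar_f T) (IT_top S ar_r ar_f T) inv_iso"
  using continuous_map_dom_iso continuous_map_cod_iso continuous_map_comp_iso
    continuous_map_id_iso continuous_map_inv_iso by blast

end
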